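(* Let $N_1,N_2\geqslant 1$ be real numbers and let $\alpha,\beta$ be real numbers with $0<\alpha,\beta\leqslant 1$. Define $$T(N_1,N_2,\alpha,\beta)=\sum_{\substack{n_1\sim N_1,\ n_2\sim N_2\\ n_1\neq n_2}}\frac{1}{|n_1^{\alpha}-n_2^{\alpha}|^{\beta}},$$ where $n_1,n_2$ range over integers. Then $$T(N_1,N_2,\alpha,\beta)\ll (N_1N_2)^{1-\alpha\beta/2}\log N_1\log N_2.$$
   Context: The notation $n\sim N$ means $N<n\leqslant 2N$. *)

theory Defs
  imports Complex_Main
begin

definition dyadic :: "real \<Rightarrow> int set" where
  "dyadic N = {n::int. N < real_of_int n \<and> real_of_int n \<le> 2 * N}"

definition T :: "real \<Rightarrow> real \<Rightarrow> real \<Rightarrow> real \<Rightarrow> real" where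
  "T N1 N2 \<alpha> \<beta> =
     (\<Sum>(n1, n2) \<in> {(n1, n2). n1 \<in> dyadic N1 \<and> n2 \<in> dyadic N2 \<and> n1 \<noteq> n2}.
        1 / (\<bar>real_of_int n1 powr \<alpha> - real_of_int n2 powr \<alpha>\<bar> powr \<beta>))"

end

theory Submission
  imports Defs "HOL-Analysis.Harmonic_Numbers"
begin

text \<open>
  By the mean value theorem, for \<open>0 < x, y \<le> B\<close> one has
  \<open>|x^\<alpha> - y^\<alpha>|^(-\<beta>) \<le> B^(1 - \<alpha>\<beta>) / (\<alpha> |x - y|)\<close>; with \<open>B = 2 max N1 N2\<close> this bounds
  \<open>T\<close> by \<open>B^(1 - \<alpha>\<beta>) / \<alpha>\<close> times a sum of reciprocal distances \<open>1 / |n1 - n2|\<close>. As \<open>T\<close> is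
  symmetric we may take \<open>N1 \<le> N2\<close> and let \<open>n1\<close> run over the outer sum: each inner sum is
  a pair of harmonic sums, at most \<open>2 (1 + log (2 N2))\<close>, and there are at most \<open>2 N1\<close> values
  of \<open>n1\<close>. So \<open>T \<le> C N2^(1 - \<alpha>\<beta>) N1 log (2 N2)\<close>, and no case distinction between
  balanced and unbalanced ranges is needed since \<open>N2^(1 - \<alpha>\<beta>) N1 \<le> (N1 N2)^(1 - \<alpha>\<beta>/2)\<close>
  for \<open>N1 \<le> N2\<close>.
\<close>

lemma powr_sub_powr_ge:
  fixes a x y B :: real
  assumes "0 < a" "a \<le> 1" "0 < y" "y < x" "x \<le> B"
  shows "a * B powr (a - 1) * (x - y) \<le> x powr a - y powr a"
proof -
  have "\<exists>z. y < z \<and> z < x \<and> x powr a - y powr a = (x - y) * (a * z powr (a - 1))"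
    by (rule MVT2) (use assms in \<open>auto intro!: has_real_derivative_powr\<close>)
  then obtain z where z: "y < z" "z < x" and mvt: "x powr a - y powr a = (x - y) * (a * z powr (a - 1))"
    by blast
  have "B powr (a - 1) \<le> z powr (a - 1)"
    using assms z by (intro powr_mono2') auto
  then show ?thesis
    unfolding mvt using assms by (simp add: mult_left_mono mult.commute mult.left_commute)
qed

lemma inverse_powr_abs_powr_diff_le:
  fixes a b x y B :: real
  assumes ha: "0 < a" "a \<le> 1" and hb: "0 < b" "b \<le> 1"
    and hxy: "0 < x" "0 < y" "x \<noteq> y" "x \<le> B" "y \<le> B"
  shows "1 / \<bar>x powr a - y powr a\<bar> powr b \<le> B powr (1 - a * b) / (a * \<bar>x - y\<bar>)"
proof -
  txt \<open>Writing \<open>d^(-b) = d^(1 - b) / d\<close>, the trivial bound \<open>d \<le> B^a\<close> controls the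
    numerator and the mean value theorem the denominator.\<close>
  have "1 / (x powr a - y powr a) powr b \<le> B powr (1 - a * b) / (a * (x - y))"
    if yx: "0 < y" "y < x" "x \<le> B" for x y
  proof -
    define d where "d = x powr a - y powr a"
    have lower: "a * B powr (a - 1) * (x - y) \<le> d"
      unfolding d_def using powr_sub_powr_ge ha yx by blast
    have lower_pos: "0 < a * B powr (a - 1) * (x - y)" using ha yx by simp
    have "d \<le> x powr a" unfolding d_def by simp
    also have "\<dots> \<le> B powr a" using ha yx by (intro powr_mono2) auto
    finally have upper: "d \<le> B powr a" .
    have "d > 0" using lower lower_pos by linarith
    then have "1 / d powr b = d powr (1 - b) / d" by (simp add: powr_diff)
    also have "\<dots> \<le> (B powr a) powr (1 - b) / (a * B powr (a - 1) * (x - y))"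
      using \<open>d > 0\<close> upper lower lower_pos hb by (intro frac_le powr_mono2) auto
    also have "\<dots> = (B powr (a * (1 - b)) / B powr (a - 1)) / (a * (x - y))"
      by (simp add: powr_powr mult_ac)
    also have "B powr (a * (1 - b)) / B powr (a - 1) = B powr (a * (1 - b) - (a - 1))"
      by (rule powr_diff[symmetric])
    also have "a * (1 - b) - (a - 1) = 1 - a * b" by (simp add: algebra_simps)
    finally show ?thesis unfolding d_def .
  qed
  note ordered = this
  show ?thesis
  proof (cases "y < x")
    case True
    with hxy ha have "y powr a < x powr a" by (simp add: powr_less_mono2)
    with ordered[of y x] True hxy show ?thesis by simp
  next
    case False
    with hxy have "x < y" by simp
    with hxy ha have "x powr a < y powr a" by (simp add: powr_less_mono2)
    with ordered[of x y] \<open>x < y\<close> hxy show ?thesis by (simp add: abs_minus_commute)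
  qed
qed

lemma harm_le_one_plus_ln: "harm n \<le> 1 + ln (real n)"
proof (cases "n = 0")
  case False
  then show ?thesis
    using euler_mascheroni_sequence_decreasing[of 1 n] by (simp add: harm_def)
qed (simp add: harm_def)

lemma sum_inverse_dist_le_harm:
  fixes n :: int and K :: nat
  assumes "A \<subseteq> {n - int K .. n + int K}"
  shows "(\<Sum>m\<in>A - {n}. 1 / \<bar>real_of_int n - real_of_int m\<bar>) \<le> 2 * harm K"
proof -
  define f where "f m = 1 / \<bar>real_of_int n - real_of_int m\<bar>" for m
  have reindexed: "sum f (g ` {1..K}) = harm K" if "\<And>j. \<bar>real_of_int n - real_of_int (g j)\<bar> = real j"
    and "inj g" for g :: "nat \<Rightarrow> int"
    using that by (simp add: sum.reindex inj_on_subset f_def harm_def divide_inverse)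
  have "A - {n} \<subseteq> (\<lambda>j. n - int j) ` {1..K} \<union> (\<lambda>j. n + int j) ` {1..K}"
  proof
    fix m assume m: "m \<in> A - {n}"
    show "m \<in> (\<lambda>j. n - int j) ` {1..K} \<union> (\<lambda>j. n + int j) ` {1..K}"
    proof (cases "m < n")
      case True
      have "nat (n - m) \<in> {1..K}" using m assms True by auto
      then show ?thesis using True by (intro UnI1 rev_image_eqI) auto
    next
      case False
      have "nat (m - n) \<in> {1..K}" using m assms False by auto
      then show ?thesis using False by (intro UnI2 rev_image_eqI) auto
    qed
  qed
  then have "sum f (A - {n}) \<le> sum f ((\<lambda>j. n - int j) ` {1..K} \<union> (\<lambda>j. n + int j) ` {1..K})"
    by (intro sum_mono2) (auto simp: f_def)
  also have "\<dots> = sum f ((\<lambda>j. n - int j) ` {1..K}) + sum f ((\<lambda>j. n + int j) ` {1..K})"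
    by (rule sum.union_disjoint) auto
  also have "\<dots> = 2 * harm K"
    by (subst (1 2) reindexed) (auto simp: inj_def)
  finally show ?thesis unfolding f_def .
qed

lemma dyadic_subset_floor: "dyadic N \<subseteq> {\<lfloor>N\<rfloor> <.. \<lfloor>2 * N\<rfloor>}"
  by (auto simp: dyadic_def le_floor_iff floor_less_iff)

lemma finite_dyadic: "finite (dyadic N)"
  using dyadic_subset_floor by (rule finite_subset) simp

lemma card_dyadic_le:
  assumes "0 \<le> N"
  shows "real (card (dyadic N)) \<le> N + 1"
proof -
  have "card (dyadic N) \<le> nat (\<lfloor>2 * N\<rfloor> - \<lfloor>N\<rfloor>)"
    using card_mono[OF _ dyadic_subset_floor] by simp
  moreover have "real_of_int (\<lfloor>2 * N\<rfloor> - \<lfloor>N\<rfloor>) \<le> N + 1" by linarith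
  ultimately show ?thesis using assms by linarith
qed

lemma sum_inverse_dist_dyadic_le:
  fixes n :: int
  assumes "1 \<le> n" "real_of_int n \<le> 2 * N"
  shows "(\<Sum>m\<in>dyadic N - {n}. 1 / \<bar>real_of_int n - real_of_int m\<bar>) \<le> 2 * (1 + ln (2 * N))"
proof -
  define K where "K = nat \<lfloor>2 * N\<rfloor>"
  have K: "1 \<le> K" "real K \<le> 2 * N" "int K = \<lfloor>2 * N\<rfloor>"
    using assms unfolding K_def by linarith+
  have "dyadic N \<subseteq> {n - int K .. n + int K}"
  proof
    fix m assume "m \<in> dyadic N"
    then have "N < real_of_int m" "m \<le> \<lfloor>2 * N\<rfloor>"
      by (auto simp: dyadic_def le_floor_iff)
    moreover have "n \<le> \<lfloor>2 * N\<rfloor>" "0 < N"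
      using assms by (auto simp: le_floor_iff)
    ultimately show "m \<in> {n - int K .. n + int K}"
      using assms K by auto
  qed
  then have "(\<Sum>m\<in>dyadic N - {n}. 1 / \<bar>real_of_int n - real_of_int m\<bar>) \<le> 2 * harm K"
    by (rule sum_inverse_dist_le_harm)
  also have "\<dots> \<le> 2 * (1 + ln (real K))"
    by (intro mult_left_mono harm_le_one_plus_ln) simp
  also have "\<dots> \<le> 2 * (1 + ln (2 * N))"
    using K by simp
  finally show ?thesis .
qed

lemma T_eq_double_sum:
  "T N1 N2 \<alpha> \<beta> = (\<Sum>n1\<in>dyadic N1. \<Sum>n2\<in>dyadic N2 - {n1}.
     1 / \<bar>real_of_int n1 powr \<alpha> - real_of_int n2 powr \<alpha>\<bar> powr \<beta>)"
proof -
  have "{(n1, n2). n1 \<in> dyadic N1 \<and> n2 \<in> dyadic N2 \<and> n1 \<noteq> n2} = Sigma (dyadic N1) (\<lambda>n1. dyadic N2 - {n1})"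
    by auto
  then show ?thesis
    unfolding T_def by (simp add: sum.Sigma finite_dyadic)
qed

lemma T_commute: "T N1 N2 \<alpha> \<beta> = T N2 N1 \<alpha> \<beta>"
  unfolding T_def
  by (rule sum.reindex_bij_witness[of _ prod.swap prod.swap]) (auto simp: abs_minus_commute)

lemma powr_mult_le_powr_mult_half:
  fixes m M c :: real
  assumes "0 < m" "m \<le> M" "0 \<le> c"
  shows "M powr (1 - c) * m \<le> (M * m) powr (1 - c / 2)"
proof -
  have "M powr (1 - c) * m = M powr (1 - c / 2) * (m / M powr (c / 2))"
    using powr_diff[of M "1 - c / 2" "c / 2"] by simp
  also have "\<dots> \<le> M powr (1 - c / 2) * (m / m powr (c / 2))"
    using assms by (intro mult_left_mono divide_left_mono powr_mono2) auto
  also have "m / m powr (c / 2) = m powr (1 - c / 2)"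
    using powr_diff[of m 1 "c / 2"] assms by simp
  also have "M powr (1 - c / 2) * m powr (1 - c / 2) = (M * m) powr (1 - c / 2)"
    using assms by (simp add: powr_mult)
  finally show ?thesis .
qed

lemma one_plus_ln_le_ln_mult_ln:
  fixes x y :: real
  assumes "1 \<le> x" "1 \<le> y"
  shows "1 + ln (2 * y) \<le> 4 * ln (2 * x) * ln (2 * y)"
proof -
  have "ln 2 \<le> ln (2 * x)" "ln 2 \<le> ln (2 * y)"
    using assms by simp_all
  then have "2 / 3 \<le> ln (2 * x)" "2 / 3 \<le> ln (2 * y)"
    using ln2_ge_two_thirds by linarith+
  moreover from this have "4 * (2 / 3) * ln (2 * y) \<le> 4 * ln (2 * x) * ln (2 * y)"
    by (intro mult_right_mono) auto
  ultimately show ?thesis by linarith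
qed

lemma T_le_harmonic_bound:
  fixes \<alpha> \<beta> N1 N2 :: real
  assumes \<alpha>: "0 < \<alpha>" "\<alpha> \<le> 1" and \<beta>: "0 < \<beta>" "\<beta> \<le> 1" and N: "1 \<le> N1" "N1 \<le> N2"
  shows "T N1 N2 \<alpha> \<beta> \<le> 2 * N1 * ((2 * N2) powr (1 - \<alpha> * \<beta>) / \<alpha>) * (2 * (1 + ln (2 * N2)))"
proof -
  define c where "c = (2 * N2) powr (1 - \<alpha> * \<beta>) / \<alpha>"
  have "T N1 N2 \<alpha> \<beta> \<le> (\<Sum>n1\<in>dyadic N1. \<Sum>n2\<in>dyadic N2 - {n1}.
      c * (1 / \<bar>real_of_int n1 - real_of_int n2\<bar>))"
    unfolding T_eq_double_sum c_def
  proof (intro sum_mono)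
    fix n1 n2 assume "n1 \<in> dyadic N1" "n2 \<in> dyadic N2 - {n1}"
    then have "0 < real_of_int n1" "real_of_int n1 \<le> 2 * N2" "0 < real_of_int n2" "real_of_int n2 \<le> 2 * N2" "n1 \<noteq> n2"
      using N by (auto simp: dyadic_def)
    then show "1 / \<bar>real_of_int n1 powr \<alpha> - real_of_int n2 powr \<alpha>\<bar> powr \<beta>
        \<le> (2 * N2) powr (1 - \<alpha> * \<beta>) / \<alpha> * (1 / \<bar>real_of_int n1 - real_of_int n2\<bar>)"
      using inverse_powr_abs_powr_diff_le[OF \<alpha> \<beta>, of "real_of_int n1" "real_of_int n2" "2 * N2"]
      by simp
  qed
  also have "\<dots> \<le> (\<Sum>n1\<in>dyadic N1. c * (2 * (1 + ln (2 * N2))))"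
  proof (intro sum_mono)
    fix n1 assume "n1 \<in> dyadic N1"
    then have "(\<Sum>n2\<in>dyadic N2 - {n1}. 1 / \<bar>real_of_int n1 - real_of_int n2\<bar>) \<le> 2 * (1 + ln (2 * N2))"
      using N by (intro sum_inverse_dist_dyadic_le) (auto simp: dyadic_def)
    moreover have "0 \<le> c" using \<alpha> by (simp add: c_def)
    ultimately show "(\<Sum>n2\<in>dyadic N2 - {n1}. c * (1 / \<bar>real_of_int n1 - real_of_int n2\<bar>)) \<le> c * (2 * (1 + ln (2 * N2)))"
      unfolding sum_distrib_left[symmetric] by (rule mult_left_mono)
  qed
  also have "\<dots> = real (card (dyadic N1)) * c * (2 * (1 + ln (2 * N2)))"
    by simp
  also have "\<dots> \<le> 2 * N1 * c * (2 * (1 + ln (2 * N2)))"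
    using card_dyadic_le[of N1] N \<alpha> by (intro mult_right_mono) (auto simp: c_def)
  finally show ?thesis unfolding c_def .
qed

lemma T_le_of_le:
  fixes \<alpha> \<beta> N1 N2 :: real
  assumes \<alpha>: "0 < \<alpha>" "\<alpha> \<le> 1" and \<beta>: "0 < \<beta>" "\<beta> \<le> 1" and N: "1 \<le> N1" "N1 \<le> N2"
  shows "T N1 N2 \<alpha> \<beta> \<le> 32 / \<alpha> * (N1 * N2) powr (1 - \<alpha> * \<beta> / 2) * ln (2 * N1) * ln (2 * N2)"
proof -
  have \<alpha>\<beta>: "0 \<le> \<alpha> * \<beta>" "\<alpha> * \<beta> \<le> 1"
    using \<alpha> \<beta> by (auto simp: mult_le_one)
  have "(2 * N2) powr (1 - \<alpha> * \<beta>) = 2 powr (1 - \<alpha> * \<beta>) * N2 powr (1 - \<alpha> * \<beta>)"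
    using N by (simp add: powr_mult)
  also have "\<dots> \<le> 2 * N2 powr (1 - \<alpha> * \<beta>)"
    using \<alpha>\<beta> powr_mono[of "1 - \<alpha> * \<beta>" 1 "2::real"] by (intro mult_right_mono) auto
  finally have two: "(2 * N2) powr (1 - \<alpha> * \<beta>) \<le> 2 * N2 powr (1 - \<alpha> * \<beta>)" .
  have "T N1 N2 \<alpha> \<beta> \<le> 2 * N1 * ((2 * N2) powr (1 - \<alpha> * \<beta>) / \<alpha>) * (2 * (1 + ln (2 * N2)))"
    by (rule T_le_harmonic_bound[OF \<alpha> \<beta> N])
  also have "\<dots> \<le> 2 * N1 * (2 * N2 powr (1 - \<alpha> * \<beta>) / \<alpha>) * (2 * (1 + ln (2 * N2)))"
    using two \<alpha> N by (intro mult_right_mono mult_left_mono divide_right_mono) auto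
  also have "\<dots> = 8 / \<alpha> * (N2 powr (1 - \<alpha> * \<beta>) * N1) * (1 + ln (2 * N2))"
    by (simp add: field_simps)
  also have "\<dots> \<le> 8 / \<alpha> * (N2 * N1) powr (1 - \<alpha> * \<beta> / 2) * (4 * ln (2 * N1) * ln (2 * N2))"
    using \<alpha> N \<alpha>\<beta> powr_mult_le_powr_mult_half[of N1 N2 "\<alpha> * \<beta>"] one_plus_ln_le_ln_mult_ln[of N1 N2]
    by (intro mult_mono mult_left_mono) auto
  also have "\<dots> = 32 / \<alpha> * (N1 * N2) powr (1 - \<alpha> * \<beta> / 2) * ln (2 * N1) * ln (2 * N2)"
    by (simp add: mult.commute)
  finally show ?thesis .
qed

theorem lemma2p11:
  fixes \<alpha> \<beta> :: real
  assumes "0 < \<alpha>" "\<alpha> \<le> 1" "0 < \<beta>" "\<beta> \<le> 1"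
  shows "\<exists>C>0. \<forall>N1 N2 :: real. N1 \<ge> 1 \<longrightarrow> N2 \<ge> 1 \<longrightarrow>
           T N1 N2 \<alpha> \<beta> \<le> C * (N1 * N2) powr (1 - \<alpha> * \<beta> / 2) * ln (2 * N1) * ln (2 * N2)"
proof (intro exI[of _ "32 / \<alpha>"] conjI allI impI)
  show "0 < 32 / \<alpha>" using assms by simp
  fix N1 N2 :: real assume "1 \<le> N1" "1 \<le> N2"
  show "T N1 N2 \<alpha> \<beta> \<le> 32 / \<alpha> * (N1 * N2) powr (1 - \<alpha> * \<beta> / 2) * ln (2 * N1) * ln (2 * N2)"
  proof (cases "N1 \<le> N2")
    case True
    then show ?thesis using T_le_of_le assms \<open>1 \<le> N1\<close> by blast
  next
    case False
    then have "T N2 N1 \<alpha> \<beta> \<le> 32 / \<alpha> * (N2 * N1) powr (1 - \<alpha> * \<beta> / 2) * ln (2 * N2) * ln (2 * N1)"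
      using T_le_of_le assms \<open>1 \<le> N2\<close> by simp
    then show ?thesis by (simp add: T_commute mult_ac)
  qed
qed

end
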